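(* There exists a continuous, $2$-periodic matrix function $A:\mathbb{R}\to\mathbb{R}^{2\times 2}$, with positive off-diagonal entries and with principal eigenvalue equal to $-\tfrac12$ for every $t$, such that for every continuous function $a:[0,\infty)\to\mathbb{R}$ with $0<a(t)<\tfrac14$ for all $t\ge0$ (in particular for non-periodic ones, e.g. $a(t)=\tfrac1{16}(2+\sin t+\sin(\sqrt2\,t))$), the matrices $\hat A(t)=A(t)+a(t)I$ have positive off-diagonal entries and principal eigenvalue $-\tfrac12+a(t)<-\tfrac14$ for all $t\ge0$, and the system $y'=\hat A(t)y$ has a solution $v(t)$ with $\|v(2k)\|\to\infty$ as $k\to\infty$ ($k\in\mathbb{N}$).
   Context: A $2\times2$ real matrix with positive off-diagonal entries has two distinct real eigenvalues; the larger is called its principal eigenvalue. $I$ is the $2\times 2$ identity matrix and $\|\cdot\|$ the Euclidean norm on $\mathbb{R}^2$. *)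

theory Defs
  imports "HOL-Analysis.Analysis"
begin

definition real_eigenvalue :: "real^2^2 \<Rightarrow> real \<Rightarrow> bool" where
  "real_eigenvalue M c \<longleftrightarrow> (\<exists>x. x \<noteq> 0 \<and> M *v x = c *\<^sub>R x)"

definition principal_eigenvalue :: "real^2^2 \<Rightarrow> real" where
  "principal_eigenvalue M = Max {c. real_eigenvalue M c}"

definition pos_offdiag :: "real^2^2 \<Rightarrow> bool" where
  "pos_offdiag M \<longleftrightarrow> M $ 1 $ 2 > 0 \<and> M $ 2 $ 1 > 0"

end

theory Submission
  imports Defs
begin

text \<open>
  Write \<open>s = sin (\<pi> t)\<close>. For every \<open>t\<close> the matrix \<open>A t + 1/2 I\<close> is singular with negative
  trace, so the principal eigenvalue of \<open>A t\<close> is \<open>-1/2\<close>. The factors \<open>exp (\<plusminus>8 cos (\<pi> t) / \<pi>)\<close>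
  in the off-diagonal entries are chosen so that \<open>y = (exp g\<^sub>1, exp g\<^sub>2)\<close> with
  \<open>g\<^sub>2 - g\<^sub>1 = 8 cos (\<pi> t) / \<pi>\<close> solves \<open>y' = (A t + a t I) y\<close> exactly, where
  \<open>g\<^sub>1' = a + 1/2 + 4 s - cos (2 \<pi> t)\<close>. Since \<open>a > 0\<close> and the oscillating part of \<open>g\<^sub>1\<close> is bounded
  and 2-periodic, \<open>g\<^sub>1 (2 k) \<ge> k - 4 / \<pi>\<close>: the solution grows like \<open>exp (t/2)\<close> along the periods.
\<close>

lemma real_eigenvalue_iff_char_poly:
  fixes M :: "real^2^2"
  assumes "M$1$2 \<noteq> 0"
  shows "real_eigenvalue M c \<longleftrightarrow> (M$1$1 - c) * (M$2$2 - c) - M$1$2 * M$2$1 = 0"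
proof
  assume "real_eigenvalue M c"
  then obtain x where x: "x \<noteq> 0" "M *v x = c *\<^sub>R x" unfolding real_eigenvalue_def by blast
  have e1: "M$1$1 * x$1 + M$1$2 * x$2 = c * x$1" and e2: "M$2$1 * x$1 + M$2$2 * x$2 = c * x$2"
    using x(2) by (auto simp: vec_eq_iff forall_2 matrix_vector_mult_def sum_2)
  have "x$1 \<noteq> 0 \<or> x$2 \<noteq> 0" using x(1) by (auto simp: vec_eq_iff forall_2)
  moreover have "((M$1$1 - c) * (M$2$2 - c) - M$1$2 * M$2$1) * x$1 = 0"
    using e1 e2 by algebra
  moreover have "((M$1$1 - c) * (M$2$2 - c) - M$1$2 * M$2$1) * x$2 = 0"
    using e1 e2 by algebra
  ultimately show "(M$1$1 - c) * (M$2$2 - c) - M$1$2 * M$2$1 = 0" by auto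
next
  assume char: "(M$1$1 - c) * (M$2$2 - c) - M$1$2 * M$2$1 = 0"
  define x :: "real^2" where "x = vector [M$1$2, c - M$1$1]"
  have "x \<noteq> 0" using assms by (auto simp: x_def vec_eq_iff forall_2)
  moreover have "M *v x = c *\<^sub>R x"
    using char by (auto simp: x_def vec_eq_iff forall_2 matrix_vector_mult_def sum_2 algebra_simps)
  ultimately show "real_eigenvalue M c" unfolding real_eigenvalue_def by blast
qed

lemma principal_eigenvalue_eqI:
  fixes M :: "real^2^2"
  assumes "M$1$2 \<noteq> 0" and "e\<^sub>2 \<le> e\<^sub>1"
    and "\<And>c. (M$1$1 - c) * (M$2$2 - c) - M$1$2 * M$2$1 = (c - e\<^sub>1) * (c - e\<^sub>2)"
  shows "principal_eigenvalue M = e\<^sub>1"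
proof -
  have "{c. real_eigenvalue M c} = {e\<^sub>1, e\<^sub>2}"
    using real_eigenvalue_iff_char_poly[OF assms(1)] assms(3) by auto
  then show ?thesis
    using assms(2) by (simp add: principal_eigenvalue_def max_def)
qed

lemma integral_has_real_derivative_within_atLeast:
  fixes f :: "real \<Rightarrow> real"
  assumes "continuous_on {b..} f" and "b \<le> t"
  shows "((\<lambda>u. integral {b..u} f) has_real_derivative f t) (at t within {b..})"
proof -
  have "continuous_on {b..t+1} f" using assms(1) by (rule continuous_on_subset) auto
  then have "((\<lambda>u. integral {b..u} f) has_vector_derivative f t) (at t within {b..t+1})"
    using integral_has_vector_derivative[of b "t+1" f t] assms(2) by simp
  moreover have "at t within {b..} = at t within {b..t+1}"
    by (rule at_within_nhd[where S="{..<t+1}"]) auto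
  ultimately show ?thesis by (simp add: has_real_derivative_iff_has_vector_derivative)
qed

definition unstable_matrix :: "real \<Rightarrow> real^2^2" where
  "unstable_matrix t =
    vector [vector [-1/2 - 4*(2 + sin(pi*t)), 2*(2 + sin(pi*t))^2 / exp(8*cos(pi*t)/pi)],
            vector [4*(2 - sin(pi*t)) * exp(8*cos(pi*t)/pi), -1/2 - 2*(2 - sin(pi*t))*(2 + sin(pi*t))]]"

lemma unstable_matrix_entries [simp]:
  "unstable_matrix t $1$1 = -1/2 - 4*(2 + sin(pi*t))"
  "unstable_matrix t $1$2 = 2*(2 + sin(pi*t))^2 / exp(8*cos(pi*t)/pi)"
  "unstable_matrix t $2$1 = 4*(2 - sin(pi*t)) * exp(8*cos(pi*t)/pi)"
  "unstable_matrix t $2$2 = -1/2 - 2*(2 - sin(pi*t))*(2 + sin(pi*t))"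
  by (simp_all add: unstable_matrix_def)

lemma continuous_on_unstable_matrix: "continuous_on UNIV unstable_matrix"
proof -
  have "continuous_on UNIV (\<lambda>t. unstable_matrix t $ i $ j)" for i j :: 2
    using exhaust_2[of i] exhaust_2[of j]
    by (elim disjE; simp; intro continuous_intros; simp)
  then have "continuous_on UNIV (\<lambda>t. \<chi> i j. unstable_matrix t $ i $ j)"
    by (intro continuous_on_vec_lambda)
  then show ?thesis by simp
qed

lemma unstable_matrix_periodic: "unstable_matrix (t + 2) = unstable_matrix t"
proof -
  have "pi * (t + 2) = pi * t + 2 * pi" by algebra
  then show ?thesis unfolding unstable_matrix_def by simp
qed

lemma pos_offdiag_unstable_shift: "pos_offdiag (unstable_matrix t + c *\<^sub>R mat 1)"
proof -
  have "0 < 2 + sin (pi*t)" "0 < 2 - sin (pi*t)"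
    using sin_le_one[of "pi*t"] sin_ge_minus_one[of "pi*t"] by linarith+
  then show ?thesis by (simp add: pos_offdiag_def mat_def)
qed

lemma principal_eigenvalue_unstable_shift:
  "principal_eigenvalue (unstable_matrix t + c *\<^sub>R mat 1) = c - 1/2"
proof (rule principal_eigenvalue_eqI)
  define s where "s = sin (pi*t)"
  obtain E where E: "exp (8*cos(pi*t)/pi) = E" and "0 < E" by auto
  define q where "q = 2 * (2 + s) * (4 - s)"
  have "0 \<le> 2 + s" "0 \<le> 4 - s"
    unfolding s_def using sin_le_one[of "pi*t"] sin_ge_minus_one[of "pi*t"] by linarith+
  then have "0 \<le> q" by (simp add: q_def)
  then show "c - 1/2 - q \<le> c - 1/2" by simp
  show "(unstable_matrix t + c *\<^sub>R mat 1)$1$2 \<noteq> 0"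
    using pos_offdiag_unstable_shift[of t c] by (simp add: pos_offdiag_def)
  show "((unstable_matrix t + c *\<^sub>R mat 1)$1$1 - x) * ((unstable_matrix t + c *\<^sub>R mat 1)$2$2 - x)
      - (unstable_matrix t + c *\<^sub>R mat 1)$1$2 * (unstable_matrix t + c *\<^sub>R mat 1)$2$1
      = (x - (c - 1/2)) * (x - (c - 1/2 - q))" for x
    using \<open>0 < E\<close>
    by (simp add: mat_def s_def[symmetric] E) (simp add: q_def field_simps power2_eq_square)
qed

definition unstable_exponent :: "(real \<Rightarrow> real) \<Rightarrow> real \<Rightarrow> real \<Rightarrow> real" where
  "unstable_exponent a \<sigma> t =
    integral {0..t} a + t/2 - \<sigma> * 4 * cos(pi*t)/pi - sin(2*pi*t)/(2*pi)"

definition unstable_solution :: "(real \<Rightarrow> real) \<Rightarrow> real \<Rightarrow> real^2" where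
  "unstable_solution a t =
    exp (unstable_exponent a 1 t) *\<^sub>R vector [1, 0] + exp (unstable_exponent a (-1) t) *\<^sub>R vector [0, 1]"

lemma unstable_exponent_has_derivative:
  assumes "continuous_on {0..} a" and "0 \<le> t"
  shows "(unstable_exponent a \<sigma> has_real_derivative
           a t + 1/2 + 4 * \<sigma> * sin(pi*t) - cos(2*pi*t)) (at t within {0..})"
  unfolding unstable_exponent_def
  by (rule derivative_eq_intros integral_has_real_derivative_within_atLeast[OF assms] refl | simp)+

lemma exp_unstable_exponent_neg:
  "exp (unstable_exponent a (-1) t) = exp (8*cos(pi*t)/pi) * exp (unstable_exponent a 1 t)"
  by (simp add: unstable_exponent_def exp_add[symmetric])

lemma unstable_shift_mult_solution:
  "(unstable_matrix t + c *\<^sub>R mat 1) *v unstable_solution a t =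
     (exp (unstable_exponent a 1 t) * (c + 1/2 + 4 * sin(pi*t) - cos(2*pi*t))) *\<^sub>R vector [1, 0] +
     (exp (unstable_exponent a (-1) t) * (c + 1/2 - 4 * sin(pi*t) - cos(2*pi*t))) *\<^sub>R vector [0, 1]"
proof -
  obtain s where s: "sin (pi*t) = s" by blast
  obtain E where E: "exp (8*cos(pi*t)/pi) = E" and "0 < E" by auto
  obtain g where g: "exp (unstable_exponent a 1 t) = g" by blast
  have "cos (2*pi*t) = 1 - 2 * s ^ 2"
    using cos_double_sin[of "pi*t"] s by (simp add: mult.assoc)
  then show ?thesis
    unfolding unstable_solution_def exp_unstable_exponent_neg s E g using \<open>0 < E\<close>
    by (simp add: vec_eq_iff forall_2 matrix_vector_mult_def sum_2 mat_def s E)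
      (simp add: field_simps power2_eq_square)
qed

lemma unstable_solution_has_derivative:
  assumes "continuous_on {0..} a" and "0 \<le> t"
  shows "(unstable_solution a has_vector_derivative
           (unstable_matrix t + a t *\<^sub>R mat 1) *v unstable_solution a t) (at t within {0..})"
proof -
  have "(unstable_solution a has_vector_derivative
     (exp (unstable_exponent a 1 t) * (a t + 1/2 + 4 * sin(pi*t) - cos(2*pi*t))) *\<^sub>R vector [1, 0] +
     (exp (unstable_exponent a (-1) t) * (a t + 1/2 - 4 * sin(pi*t) - cos(2*pi*t))) *\<^sub>R vector [0, 1])
     (at t within {0..})"
    unfolding unstable_solution_def
    using unstable_exponent_has_derivative[OF assms]
    by (intro derivative_eq_intros) auto
  then show ?thesis by (simp only: unstable_shift_mult_solution)
qed

lemma norm_unstable_solution_at_period_ge: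
  assumes "\<And>t. 0 \<le> t \<Longrightarrow> 0 \<le> a t" and "continuous_on {0..} a"
  shows "real k - 4/pi \<le> norm (unstable_solution a (2 * real k))"
proof -
  have "0 \<le> integral {0..2 * real k} a"
  proof (rule integral_nonneg)
    show "a integrable_on {0..2 * real k}"
      by (rule integrable_continuous_interval, rule continuous_on_subset[OF assms(2)]) auto
  qed (use assms(1) in auto)
  moreover have "cos (pi * (2 * real k)) = 1"
    using cos_2npi[of k] by (simp add: mult_ac)
  moreover have "sin (2 * pi * (2 * real k)) = 0"
    using sin_npi[of "4*k"] by (simp add: mult_ac)
  ultimately have "real k - 4/pi \<le> unstable_exponent a 1 (2 * real k)"
    by (simp add: unstable_exponent_def)
  also have "\<dots> \<le> exp (unstable_exponent a 1 (2 * real k))"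
    using exp_ge_add_one_self[of "unstable_exponent a 1 (2 * real k)"] by linarith
  also have "\<dots> = \<bar>unstable_solution a (2 * real k) $ 1\<bar>"
    by (simp add: unstable_solution_def)
  also have "\<dots> \<le> norm (unstable_solution a (2 * real k))"
    by (rule component_le_norm_cart)
  finally show ?thesis .
qed

lemma unstable_solution_unbounded:
  assumes "\<And>t. 0 \<le> t \<Longrightarrow> 0 \<le> a t" and "continuous_on {0..} a"
  shows "filterlim (\<lambda>k::nat. norm (unstable_solution a (2 * real k))) at_top sequentially"
proof (rule filterlim_at_top_mono)
  have "filterlim (\<lambda>k::nat. - 4/pi + real k) at_top sequentially"
    by (rule filterlim_tendsto_add_at_top[OF tendsto_const filterlim_real_sequentially])
  then show "filterlim (\<lambda>k::nat. real k - 4/pi) at_top sequentially"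
    by simp
qed (use norm_unstable_solution_at_period_ge[OF assms] in auto)

theorem mainTheorem3:
  shows "\<exists>A :: real \<Rightarrow> real^2^2.
    continuous_on UNIV A \<and>
    (\<forall>t. A (t + 2) = A t) \<and>
    (\<forall>t. pos_offdiag (A t) \<and> principal_eigenvalue (A t) = - 1/2) \<and>
    (\<forall>a :: real \<Rightarrow> real.
       continuous_on {0..} a \<and> (\<forall>t\<ge>0. 0 < a t \<and> a t < 1/4) \<longrightarrow>
       (\<forall>t\<ge>0. pos_offdiag (A t + a t *\<^sub>R mat 1) \<and>
               principal_eigenvalue (A t + a t *\<^sub>R mat 1) = - 1/2 + a t \<and>
               - 1/2 + a t < - 1/4) \<and>
       (\<exists>v :: real \<Rightarrow> real^2.
          (\<forall>t\<ge>0. (v has_vector_derivative ((A t + a t *\<^sub>R mat 1) *v v t)) (at t within {0..})) \<and>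
          filterlim (\<lambda>k::nat. norm (v (2 * real k))) at_top sequentially))"
proof (intro exI[of _ unstable_matrix] conjI allI impI)
  show "continuous_on UNIV unstable_matrix" by (rule continuous_on_unstable_matrix)
  show "unstable_matrix (t + 2) = unstable_matrix t" for t by (rule unstable_matrix_periodic)
  show "pos_offdiag (unstable_matrix t)" "principal_eigenvalue (unstable_matrix t) = - 1/2" for t
    using pos_offdiag_unstable_shift[of t 0] principal_eigenvalue_unstable_shift[of t 0] by simp_all
next
  fix a :: "real \<Rightarrow> real" and t :: real
  assume "continuous_on {0..} a \<and> (\<forall>t\<ge>0. 0 < a t \<and> a t < 1/4)" and "0 \<le> t"
  then have "a t < 1/4" by simp
  then show "pos_offdiag (unstable_matrix t + a t *\<^sub>R mat 1)"
    "principal_eigenvalue (unstable_matrix t + a t *\<^sub>R mat 1) = - 1/2 + a t" "- 1/2 + a t < - 1/4"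
    using pos_offdiag_unstable_shift principal_eigenvalue_unstable_shift by simp_all
next
  fix a :: "real \<Rightarrow> real"
  assume "continuous_on {0..} a \<and> (\<forall>t\<ge>0. 0 < a t \<and> a t < 1/4)"
  then have cont: "continuous_on {0..} a" and nonneg: "\<And>t. 0 \<le> t \<Longrightarrow> 0 \<le> a t"
    by (auto simp: less_imp_le)
  show "\<exists>v. (\<forall>t\<ge>0. (v has_vector_derivative (unstable_matrix t + a t *\<^sub>R mat 1) *v v t) (at t within {0..}))
      \<and> filterlim (\<lambda>k::nat. norm (v (2 * real k))) at_top sequentially"
    using unstable_solution_has_derivative[OF cont] unstable_solution_unbounded[OF nonneg cont]
    by blast
qed

end
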